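(* Let $p=p(n)$ satisfy $pn^{1/2}\to\infty$. For all $\varepsilon>0$ and $\rho>0$ there exists $D(\varepsilon,\rho)>0$ such that $G(n,p)$ a.a.s. has the following property: for every vertex set $X$ with $|X|\ge Dp^{-2}$, there are at most $\varepsilon n^2p$ edges $\{v,w\}$ of $G[V\setminus X]$ such that the number of common neighbours of $v$ and $w$ in $X$ is not in $[(1-\rho)|X|p^2,(1+\rho)|X|p^2]$.
   Context: $G=G(n,p)$ is the binomial random graph on an $n$-vertex set $V$; a.a.s. means with probability tending to $1$ as $n\to\infty$. *)

theory Defs
  imports "HOL-Probability.Probability"
begin

text \<open>Vertex set V = {0..<n}. Potential edges are pairs (i,j) with i < j < n.
A graph is encoded as a function E on pairs; only the values on potential
edges matter (all other values are False under gnp).\<close>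

definition vpairs :: "nat \<Rightarrow> (nat \<times> nat) set" where
  "vpairs n = {(i, j). i < j \<and> j < n}"

definition gnp :: "nat \<Rightarrow> real \<Rightarrow> (nat \<times> nat \<Rightarrow> bool) pmf" where
  "gnp n p = Pi_pmf (vpairs n) False (\<lambda>_. bernoulli_pmf p)"

definition adj :: "(nat \<times> nat \<Rightarrow> bool) \<Rightarrow> nat \<Rightarrow> nat \<Rightarrow> bool" where
  "adj E v w \<longleftrightarrow> (v < w \<and> E (v, w)) \<or> (w < v \<and> E (w, v))"

definition common_nbrs :: "(nat \<times> nat \<Rightarrow> bool) \<Rightarrow> nat set \<Rightarrow> nat \<Rightarrow> nat \<Rightarrow> nat" where
  "common_nbrs E X v w = card {x \<in> X. adj E v x \<and> adj E w x}"

definition bad_edges ::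
  "nat \<Rightarrow> real \<Rightarrow> real \<Rightarrow> (nat \<times> nat \<Rightarrow> bool) \<Rightarrow> nat set \<Rightarrow> (nat \<times> nat) set" where
  "bad_edges n p \<rho> E X =
     {(v, w) \<in> vpairs n. v \<notin> X \<and> w \<notin> X \<and> E (v, w) \<and>
        \<not> ((1 - \<rho>) * real (card X) * p\<^sup>2 \<le> real (common_nbrs E X v w) \<and>
             real (common_nbrs E X v w) \<le> (1 + \<rho>) * real (card X) * p\<^sup>2)}"

definition good_property ::
  "nat \<Rightarrow> real \<Rightarrow> real \<Rightarrow> real \<Rightarrow> real \<Rightarrow> (nat \<times> nat \<Rightarrow> bool) \<Rightarrow> bool" where
  "good_property n p \<epsilon> \<rho> D E \<longleftrightarrow>
     (\<forall>X. X \<subseteq> {..<n} \<longrightarrow> real (card X) \<ge> D / p\<^sup>2 \<longrightarrow>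
        real (card (bad_edges n p \<rho> E X)) \<le> \<epsilon> * (real n)\<^sup>2 * p)"

end

theory Submission
  imports Defs
begin

text \<open>Let \<open>r = \<rho>/3\<close> and call \<open>w \<notin> Y\<close> deviant for \<open>Y\<close> if its degree into \<open>Y\<close> is not within
  \<open>(1 \<plusminus> r) |Y| p\<close>. If \<open>v\<close> is not deviant for \<open>X\<close> and \<open>w\<close> is not deviant for the neighbourhood of \<open>v\<close>
  in \<open>X\<close>, the codegree of \<open>v, w\<close> in \<open>X\<close> is within \<open>(1 \<plusminus> \<rho>) |X| p\<^sup>2\<close>. The degrees of distinct
  vertices into \<open>Y\<close> are independent, so by Chernoff's bound and a union bound over all sets, for
  large \<open>D\<close> every \<open>Y\<close> with \<open>|Y| p \<ge> (1 - r) D\<close> has at most \<open>n/N\<close> deviant vertices, except with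
  probability \<open>2\<^sup>-\<^sup>n\<close>; hence there are at most \<open>2n\<^sup>2/N\<close> bad pairs for every \<open>X\<close> with \<open>|X| \<ge> D/p\<^sup>2\<close>.
  Badness of a pair outside \<open>X\<close> depends only on edges meeting \<open>X\<close>, while being an edge depends
  only on the pair itself, so the number of bad edges is dominated by \<open>Bin(2n\<^sup>2/N, p)\<close>. An exponential
  moment bound and a union bound over the \<open>2\<^sup>n\<close> sets \<open>X\<close> finish the proof since \<open>np \<rightarrow> \<infinity>\<close>.\<close>

subsection \<open>Independence of events in product distributions\<close>

definition depends_on :: "'a set \<Rightarrow> ('a \<Rightarrow> 'b) set \<Rightarrow> bool" where
  "depends_on S A \<longleftrightarrow> (\<forall>f g. (\<forall>x\<in>S. f x = g x) \<longrightarrow> (f \<in> A \<longleftrightarrow> g \<in> A))"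

lemma depends_onD:
  assumes "depends_on S A" and "\<And>x. x \<in> S \<Longrightarrow> f x = g x"
  shows "f \<in> A \<longleftrightarrow> g \<in> A"
  using assms(2) by (rule assms(1)[unfolded depends_on_def, rule_format])

lemma depends_on_INT:
  fixes A :: "'v \<Rightarrow> ('a \<Rightarrow> 'b) set"
  assumes "\<And>v. v \<in> K \<Longrightarrow> depends_on (S v) (A v)"
  shows "depends_on (\<Union>v\<in>K. S v) (\<Inter>v\<in>K. A v)"
  unfolding depends_on_def
proof (intro allI impI)
  fix f g :: "'a \<Rightarrow> 'b" assume "\<forall>x\<in>(\<Union>v\<in>K. S v). f x = g x"
  then have "f \<in> A v \<longleftrightarrow> g \<in> A v" if "v \<in> K" for v
    using that by (intro depends_onD[OF assms]) auto
  then show "f \<in> (\<Inter>v\<in>K. A v) \<longleftrightarrow> g \<in> (\<Inter>v\<in>K. A v)"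
    by blast
qed

lemma depends_on_card_Collect:
  assumes "B \<subseteq> S"
  shows "depends_on S {f. Q (card {c\<in>B. f c})}"
  unfolding depends_on_def
proof (intro allI impI)
  fix f g :: "'a \<Rightarrow> bool" assume "\<forall>x\<in>S. f x = g x"
  then have "{c\<in>B. f c} = {c\<in>B. g c}"
    using assms by auto
  then show "f \<in> {f. Q (card {c\<in>B. f c})} \<longleftrightarrow> g \<in> {f. Q (card {c\<in>B. f c})}"
    by simp
qed

lemma prob_map_pair_pmf_eq_mult:
  assumes "\<And>x y. x \<in> set_pmf M \<Longrightarrow> y \<in> set_pmf N \<Longrightarrow> h (x, y) \<in> C \<longleftrightarrow> x \<in> A \<and> y \<in> B"
  shows "measure_pmf.prob (map_pmf h (pair_pmf M N)) C = measure_pmf.prob M A * measure_pmf.prob N B"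
proof -
  have "measure_pmf.prob (map_pmf h (pair_pmf M N)) C =
        measure_pmf.prob (pair_pmf M N) (h -` C \<inter> set_pmf (pair_pmf M N))"
    unfolding measure_map_pmf by (rule measure_Int_set_pmf[symmetric])
  also have "h -` C \<inter> set_pmf (pair_pmf M N) = (A \<inter> set_pmf M) \<times> (B \<inter> set_pmf N)"
    using assms by auto
  also have "measure_pmf.prob (pair_pmf M N) \<dots> =
      measure_pmf.prob M (A \<inter> set_pmf M) * measure_pmf.prob N (B \<inter> set_pmf N)"
    by (intro measure_pmf_prob_product countable_subset[OF _ countable_set_pmf]) auto
  finally show ?thesis by (simp add: measure_Int_set_pmf)
qed

lemma prob_Pi_pmf_Int_independent:
  fixes P :: "'a \<Rightarrow> 'b pmf"
  assumes fin: "finite I" and disj: "S \<inter> T = {}"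
    and A: "depends_on S A" and B: "depends_on T B"
  shows "measure_pmf.prob (Pi_pmf I d P) (A \<inter> B) =
         measure_pmf.prob (Pi_pmf I d P) A * measure_pmf.prob (Pi_pmf I d P) B"
proof -
  define M where "M = Pi_pmf (I \<inter> S) d P"
  define N where "N = Pi_pmf (I - S) d P"
  define glue :: "('a \<Rightarrow> 'b) \<times> ('a \<Rightarrow> 'b) \<Rightarrow> 'a \<Rightarrow> 'b" where
    "glue = (\<lambda>(f, g) x. if x \<in> I \<inter> S then f x else g x)"
  have "Pi_pmf I d P = Pi_pmf ((I \<inter> S) \<union> (I - S)) d P"
    by (simp only: Int_Diff_Un)
  also have "\<dots> = map_pmf glue (pair_pmf M N)"
    unfolding M_def N_def glue_def using fin by (intro Pi_pmf_union) auto
  finally have split: "Pi_pmf I d P = map_pmf glue (pair_pmf M N)" .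
  have glue_A: "glue (f, g) \<in> A \<longleftrightarrow> f \<in> A" if "f \<in> set_pmf M" "g \<in> set_pmf N" for f g
  proof (rule depends_onD[OF A])
    fix x assume "x \<in> S"
    then show "glue (f, g) x = f x"
      using that fin set_Pi_pmf_subset[of "I \<inter> S" d P] set_Pi_pmf_subset[of "I - S" d P]
      unfolding M_def N_def glue_def by (cases "x \<in> I") auto
  qed
  have glue_B: "glue (f, g) \<in> B \<longleftrightarrow> g \<in> B" for f g
    by (rule depends_onD[OF B]) (use disj in \<open>auto simp: glue_def\<close>)
  have "measure_pmf.prob (Pi_pmf I d P) (A \<inter> UNIV) = measure_pmf.prob M A * measure_pmf.prob N UNIV"
    unfolding split by (rule prob_map_pair_pmf_eq_mult) (use glue_A in auto)
  moreover have "measure_pmf.prob (Pi_pmf I d P) (UNIV \<inter> B) = measure_pmf.prob M UNIV * measure_pmf.prob N B"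
    unfolding split by (rule prob_map_pair_pmf_eq_mult) (use glue_B in auto)
  moreover have "measure_pmf.prob (Pi_pmf I d P) (A \<inter> B) = measure_pmf.prob M A * measure_pmf.prob N B"
    unfolding split by (rule prob_map_pair_pmf_eq_mult) (use glue_A glue_B in auto)
  ultimately show ?thesis by simp
qed

lemma prob_Pi_pmf_INT_independent:
  assumes fin: "finite I" and K: "finite K"
    and disj: "disjoint_family_on S K"
    and dep: "\<And>v. v \<in> K \<Longrightarrow> depends_on (S v) (A v)"
  shows "measure_pmf.prob (Pi_pmf I d P) (\<Inter>v\<in>K. A v) = (\<Prod>v\<in>K. measure_pmf.prob (Pi_pmf I d P) (A v))"
  using K disj dep
proof (induction K rule: finite_induct)
  case empty
  then show ?case by simp
next
  case (insert v K)
  have "S v \<inter> (\<Union>u\<in>K. S u) = {}"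
    using insert.prems(1) insert.hyps(2) unfolding disjoint_family_on_def by auto
  moreover have "depends_on (\<Union>u\<in>K. S u) (\<Inter>u\<in>K. A u)"
    using insert.prems(2) by (intro depends_on_INT) auto
  ultimately have "measure_pmf.prob (Pi_pmf I d P) (A v \<inter> (\<Inter>u\<in>K. A u)) =
        measure_pmf.prob (Pi_pmf I d P) (A v) * measure_pmf.prob (Pi_pmf I d P) (\<Inter>u\<in>K. A u)"
    using insert.prems(2) by (intro prob_Pi_pmf_Int_independent[OF fin]) auto
  then show ?case
    using insert disjoint_family_on_mono[OF subset_insertI insert.prems(1)] by simp
qed

lemma prob_Pi_pmf_card_events_ge:
  assumes fin: "finite I" and U: "finite U"
    and disj: "disjoint_family_on S U"
    and dep: "\<And>v. v \<in> U \<Longrightarrow> depends_on (S v) (A v)"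
    and le_q: "\<And>v. v \<in> U \<Longrightarrow> measure_pmf.prob (Pi_pmf I d P) (A v) \<le> q" and q: "0 \<le> q"
  shows "measure_pmf.prob (Pi_pmf I d P) {f. k \<le> card {v\<in>U. f \<in> A v}} \<le> 2 ^ card U * q ^ k"
proof -
  let ?M = "Pi_pmf I d P"
  let ?F = "{K. K \<subseteq> U \<and> card K = k}"
  have "{f. k \<le> card {v\<in>U. f \<in> A v}} \<subseteq> (\<Union>K\<in>?F. \<Inter>v\<in>K. A v)"
  proof
    fix f assume "f \<in> {f. k \<le> card {v\<in>U. f \<in> A v}}"
    then have "k \<le> card {v\<in>U. f \<in> A v}" by simp
    then obtain K where "K \<subseteq> {v\<in>U. f \<in> A v}" "card K = k"
      by (rule obtain_subset_with_card_n)
    then show "f \<in> (\<Union>K\<in>?F. \<Inter>v\<in>K. A v)" by blast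
  qed
  then have "measure_pmf.prob ?M {f. k \<le> card {v\<in>U. f \<in> A v}} \<le> measure_pmf.prob ?M (\<Union>K\<in>?F. \<Inter>v\<in>K. A v)"
    by (intro measure_pmf.finite_measure_mono) auto
  also have "\<dots> \<le> (\<Sum>K\<in>?F. measure_pmf.prob ?M (\<Inter>v\<in>K. A v))"
    using U by (intro measure_pmf.finite_measure_subadditive_finite) auto
  also have "\<dots> \<le> (\<Sum>K\<in>?F. q ^ k)"
  proof (rule sum_mono)
    fix K assume K: "K \<in> ?F"
    then have KU: "K \<subseteq> U" and "finite K" and "card K = k"
      using U by (auto intro: finite_subset)
    have "measure_pmf.prob ?M (\<Inter>v\<in>K. A v) = (\<Prod>v\<in>K. measure_pmf.prob ?M (A v))"
      using disjoint_family_on_mono[OF KU disj] KU dep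
      by (intro prob_Pi_pmf_INT_independent[OF fin \<open>finite K\<close>]) auto
    also have "\<dots> \<le> (\<Prod>v\<in>K. q)"
      using KU le_q by (intro prod_mono) auto
    finally show "measure_pmf.prob ?M (\<Inter>v\<in>K. A v) \<le> q ^ k"
      using \<open>card K = k\<close> by simp
  qed
  also have "\<dots> = real (card ?F) * q ^ k" by simp
  also have "\<dots> \<le> 2 ^ card U * q ^ k"
  proof -
    have "card ?F \<le> card (Pow U)"
      using U by (intro card_mono) auto
    then have "real (card ?F) \<le> 2 ^ card U"
      using U by (simp add: card_Pow flip: of_nat_le_iff)
    then show ?thesis
      using q by (intro mult_right_mono) auto
  qed
  finally show ?thesis .
qed

subsection \<open>Chernoff bounds\<close>

definition deviates :: "real \<Rightarrow> real \<Rightarrow> real \<Rightarrow> bool" where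
  "deviates r m x \<longleftrightarrow> \<not> ((1 - r) * m < x \<and> x < (1 + r) * m)"

lemma finite_set_Pi_pmf:
  fixes P :: "'a \<Rightarrow> 'b :: finite pmf"
  assumes "finite I"
  shows "finite (set_pmf (Pi_pmf I d P))"
  using assms by (intro finite_subset[OF set_Pi_pmf_subset'] finite_PiE_dflt) auto

lemma expectation_exp_card_Pi_bernoulli_le:
  fixes p t :: real
  assumes fin: "finite I" and CI: "C \<subseteq> I" and p: "0 \<le> p" "p \<le> 1"
  shows "measure_pmf.expectation (Pi_pmf I d (\<lambda>_. bernoulli_pmf p)) (\<lambda>f. exp (t * card {c\<in>C. f c}))
         \<le> exp (card C * p * (exp t - 1))"
proof -
  define g where "g = (\<lambda>c (b::bool). if c \<in> C \<and> b then exp t else 1)"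
  have finC: "finite C" using finite_subset[OF CI fin] .
  have "exp (t * card {c\<in>C. f c}) = (\<Prod>c\<in>I. g c (f c))" for f
  proof -
    have "(\<Prod>c\<in>I. g c (f c)) = (\<Prod>c\<in>{c\<in>C. f c}. exp t)"
      unfolding g_def using fin CI by (intro prod.mono_neutral_cong_right) auto
    then show ?thesis by (simp add: exp_of_nat_mult[symmetric] mult.commute)
  qed
  then have "measure_pmf.expectation (Pi_pmf I d (\<lambda>_. bernoulli_pmf p)) (\<lambda>f. exp (t * card {c\<in>C. f c}))
      = measure_pmf.expectation (Pi_pmf I d (\<lambda>_. bernoulli_pmf p)) (\<lambda>f. \<Prod>c\<in>I. g c (f c))"
    by simp
  also have "\<dots> = (\<Prod>c\<in>I. measure_pmf.expectation (bernoulli_pmf p) (g c))"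
    by (rule expectation_prod_Pi_pmf[OF fin]) (auto simp: g_def intro!: integrable_measure_pmf_finite)
  also have "\<dots> = (1 + p * (exp t - 1)) ^ card C"
    unfolding g_def using fin CI p
    by (subst prod.mono_neutral_cong_right[of I C _ "\<lambda>_. 1 + p * (exp t - 1)"])
       (auto simp: algebra_simps)
  also have "\<dots> \<le> exp (p * (exp t - 1)) ^ card C"
    using p by (intro power_mono exp_ge_add_one_self) (auto simp: algebra_simps intro!: add_increasing2)
  also have "\<dots> = exp (card C * p * (exp t - 1))"
    by (simp add: exp_of_nat_mult[symmetric] mult.assoc)
  finally show ?thesis .
qed

lemma prob_card_Pi_bernoulli_exponential_tail:
  fixes p t b :: real
  assumes fin: "finite I" and CI: "C \<subseteq> I" and p: "0 \<le> p" "p \<le> 1"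
  shows "measure_pmf.prob (Pi_pmf I d (\<lambda>_. bernoulli_pmf p)) {f. b \<le> t * card {c\<in>C. f c}}
         \<le> exp (card C * p * (exp t - 1) - b)"
proof -
  let ?M = "Pi_pmf I d (\<lambda>_. bernoulli_pmf p)"
  have "measure_pmf.prob ?M {f. b \<le> t * card {c\<in>C. f c}}
        = measure_pmf.prob ?M {f \<in> space ?M. exp b \<le> exp (t * card {c\<in>C. f c})}"
    by simp
  also have "\<dots> \<le> measure_pmf.expectation ?M (\<lambda>f. exp (t * card {c\<in>C. f c})) / exp b"
    using finite_set_Pi_pmf[OF fin]
    by (intro integral_Markov_inequality_measure[where A = UNIV] integrable_measure_pmf_finite) auto
  also have "\<dots> \<le> exp (card C * p * (exp t - 1)) / exp b"
    by (intro divide_right_mono expectation_exp_card_Pi_bernoulli_le[OF fin CI p]) simp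
  finally show ?thesis by (simp add: exp_diff)
qed

lemma exp_le_one_plus_plus_square:
  fixes s :: real
  assumes "\<bar>s\<bar> \<le> 1"
  shows "exp s \<le> 1 + s + s\<^sup>2"
proof (cases "0 \<le> s")
  case True
  then show ?thesis using assms exp_bound[of s] by simp
next
  case False
  have "s * (s * s) \<le> 0"
    using False by (intro mult_nonpos_nonneg) auto
  then have "1 \<le> (1 - s) * (1 + s + s\<^sup>2)"
    by (simp add: algebra_simps power2_eq_square)
  also have "\<dots> \<le> exp (- s) * (1 + s + s\<^sup>2)"
    using assms exp_ge_add_one_self[of "- s"] by (intro mult_right_mono) auto
  finally show ?thesis by (simp add: exp_minus field_simps)
qed

lemma prob_card_Pi_bernoulli_tail:
  fixes p t a :: real
  assumes fin: "finite I" and CI: "C \<subseteq> I" and p: "0 \<le> p" "p \<le> 1" and t: "\<bar>t\<bar> \<le> 1"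
  defines "\<mu> \<equiv> card C * p"
  shows "measure_pmf.prob (Pi_pmf I d (\<lambda>_. bernoulli_pmf p)) {f. t * \<mu> + a \<le> t * card {c\<in>C. f c}}
         \<le> exp (\<mu> * t\<^sup>2 - a)"
proof -
  have "0 \<le> \<mu>" unfolding \<mu>_def using p by simp
  have "measure_pmf.prob (Pi_pmf I d (\<lambda>_. bernoulli_pmf p)) {f. t * \<mu> + a \<le> t * card {c\<in>C. f c}}
        \<le> exp (\<mu> * (exp t - 1) - (t * \<mu> + a))"
    unfolding \<mu>_def by (rule prob_card_Pi_bernoulli_exponential_tail[OF fin CI p])
  also have "\<dots> \<le> exp (\<mu> * (t + t\<^sup>2) - (t * \<mu> + a))"
    using \<open>0 \<le> \<mu>\<close> exp_le_one_plus_plus_square[OF t] by (intro exp_mono diff_right_mono mult_left_mono) auto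
  also have "\<dots> = exp (\<mu> * t\<^sup>2 - a)"
    by (simp add: algebra_simps)
  finally show ?thesis .
qed

lemma prob_card_Pi_bernoulli_deviates:
  fixes p r :: real
  assumes fin: "finite I" and CI: "C \<subseteq> I" and p: "0 \<le> p" "p \<le> 1" and r: "0 \<le> r" "r \<le> 2"
  defines "\<mu> \<equiv> card C * p"
  shows "measure_pmf.prob (Pi_pmf I d (\<lambda>_. bernoulli_pmf p)) {f. deviates r \<mu> (card {c\<in>C. f c})}
         \<le> 2 * exp (- (r\<^sup>2 * \<mu> / 4))"
proof -
  let ?M = "Pi_pmf I d (\<lambda>_. bernoulli_pmf p)"
  let ?tail = "\<lambda>t. {f. t * \<mu> + r\<^sup>2 * \<mu> / 2 \<le> t * card {c\<in>C. f c}}"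
  have tail: "measure_pmf.prob ?M (?tail t) \<le> exp (- (r\<^sup>2 * \<mu> / 4))" if t: "t = r / 2 \<or> t = - r / 2" for t
  proof -
    have "\<bar>t\<bar> \<le> 1" using t r by auto
    then have "measure_pmf.prob ?M (?tail t) \<le> exp (\<mu> * t\<^sup>2 - r\<^sup>2 * \<mu> / 2)"
      unfolding \<mu>_def by (rule prob_card_Pi_bernoulli_tail[OF fin CI p])
    also have "t\<^sup>2 = r\<^sup>2 / 4"
      using t by (auto simp: power2_eq_square)
    also have "exp (\<mu> * (r\<^sup>2 / 4) - r\<^sup>2 * \<mu> / 2) = exp (- (r\<^sup>2 * \<mu> / 4))"
      by (simp add: field_simps)
    finally show ?thesis .
  qed
  have "{f. deviates r \<mu> (card {c\<in>C. f c})} \<subseteq> ?tail (- r / 2) \<union> ?tail (r / 2)"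
  proof
    fix f
    assume "f \<in> {f. deviates r \<mu> (card {c\<in>C. f c})}"
    then consider "card {c\<in>C. f c} \<le> (1 - r) * \<mu>" | "(1 + r) * \<mu> \<le> card {c\<in>C. f c}"
      unfolding deviates_def by fastforce
    then show "f \<in> ?tail (- r / 2) \<union> ?tail (r / 2)"
    proof cases
      case 1
      then have "r / 2 * card {c\<in>C. f c} \<le> r / 2 * ((1 - r) * \<mu>)"
        using r by (intro mult_left_mono) auto
      then show ?thesis by (simp add: power2_eq_square algebra_simps)
    next
      case 2
      then have "r / 2 * ((1 + r) * \<mu>) \<le> r / 2 * card {c\<in>C. f c}"
        using r by (intro mult_left_mono) auto
      then show ?thesis by (simp add: power2_eq_square algebra_simps)
    qed
  qed
  then have "measure_pmf.prob ?M {f. deviates r \<mu> (card {c\<in>C. f c})}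
             \<le> measure_pmf.prob ?M (?tail (- r / 2)) + measure_pmf.prob ?M (?tail (r / 2))"
    by (intro order_trans[OF measure_pmf.finite_measure_mono measure_subadditive]) auto
  also have "\<dots> \<le> 2 * exp (- (r\<^sup>2 * \<mu> / 4))"
    using tail[of "- r / 2"] tail[of "r / 2"] by simp
  finally show ?thesis .
qed

subsection \<open>Degrees in the random graph\<close>

definition edge_pair :: "nat \<Rightarrow> nat \<Rightarrow> nat \<times> nat" where
  "edge_pair v w = (min v w, max v w)"

lemma finite_vpairs: "finite (vpairs n)"
  by (rule finite_subset[of _ "{..<n} \<times> {..<n}"]) (auto simp: vpairs_def)

lemma adj_iff_edge_pair: "adj E v w \<longleftrightarrow> v \<noteq> w \<and> E (edge_pair v w)"
  unfolding adj_def edge_pair_def by (cases v w rule: linorder_cases) auto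

lemma edge_pair_eq_iff: "edge_pair v x = edge_pair w y \<longleftrightarrow> (v = w \<and> x = y) \<or> (v = y \<and> x = w)"
  unfolding edge_pair_def by (auto simp: min_def max_def)

lemma edge_pair_in_vpairs: "v < n \<Longrightarrow> w < n \<Longrightarrow> v \<noteq> w \<Longrightarrow> edge_pair v w \<in> vpairs n"
  unfolding edge_pair_def vpairs_def by (auto simp: min_def max_def)

lemma inj_on_edge_pair: "v \<notin> X \<Longrightarrow> inj_on (edge_pair v) X"
  unfolding inj_on_def edge_pair_eq_iff by blast

lemma card_neighbours_eq_card_edges:
  assumes "v \<notin> X"
  shows "card {x\<in>X. adj E v x} = card {c\<in>edge_pair v ` X. E c}"
proof -
  have "{c\<in>edge_pair v ` X. E c} = edge_pair v ` {x\<in>X. adj E v x}"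
    using assms by (auto simp: adj_iff_edge_pair)
  moreover have "inj_on (edge_pair v) {x\<in>X. adj E v x}"
    using inj_on_edge_pair[OF assms] by (rule inj_on_subset) auto
  ultimately show ?thesis by (simp add: card_image)
qed

definition deviant_vertices :: "nat \<Rightarrow> real \<Rightarrow> real \<Rightarrow> (nat \<times> nat \<Rightarrow> bool) \<Rightarrow> nat set \<Rightarrow> nat set" where
  "deviant_vertices n p r E Y =
     {w \<in> {..<n} - Y. deviates r (real (card Y) * p) (card {y\<in>Y. adj E w y})}"

lemma prob_card_deviant_vertices_ge:
  fixes p r :: real
  assumes p: "0 \<le> p" "p \<le> 1" and r: "0 \<le> r" "r \<le> 2" and Y: "Y \<subseteq> {..<n}"
  shows "measure_pmf.prob (gnp n p) {E. k \<le> card (deviant_vertices n p r E Y)}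
         \<le> 2 ^ n * (2 * exp (- (r\<^sup>2 * (card Y * p) / 4))) ^ k"
proof -
  define W where "W = {..<n} - Y"
  define A where "A = (\<lambda>w. {E. deviates r (card Y * p) (card {y\<in>Y. adj E w y})})"
  have "measure_pmf.prob (gnp n p) {E. k \<le> card {w\<in>W. E \<in> A w}}
        \<le> 2 ^ card W * (2 * exp (- (r\<^sup>2 * (card Y * p) / 4))) ^ k"
    unfolding gnp_def
  proof (rule prob_Pi_pmf_card_events_ge[OF finite_vpairs _ _, where S = "\<lambda>w. edge_pair w ` Y"])
    show "finite W" by (simp add: W_def)
    show "disjoint_family_on (\<lambda>w. edge_pair w ` Y) W"
      unfolding disjoint_family_on_def
    proof (intro ballI impI)
      fix u v assume "u \<in> W" "v \<in> W" "u \<noteq> v"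
      then have "edge_pair u y \<noteq> edge_pair v y'" if "y \<in> Y" "y' \<in> Y" for y y'
        using that unfolding W_def edge_pair_eq_iff by blast
      then show "edge_pair u ` Y \<inter> edge_pair v ` Y = {}" by blast
    qed
  next
    fix w assume w: "w \<in> W"
    then have A_eq: "A w = {E. deviates r (card Y * p) (card {c\<in>edge_pair w ` Y. E c})}"
      unfolding A_def W_def by (simp add: card_neighbours_eq_card_edges)
    show "depends_on (edge_pair w ` Y) (A w)"
      unfolding A_eq by (rule depends_on_card_Collect) simp
    have "edge_pair w ` Y \<subseteq> vpairs n"
      using w Y unfolding W_def by (auto intro!: edge_pair_in_vpairs)
    moreover have "card (edge_pair w ` Y) = card Y"
      using w unfolding W_def by (intro card_image inj_on_edge_pair) auto
    ultimately show "measure_pmf.prob (Pi_pmf (vpairs n) False (\<lambda>_. bernoulli_pmf p)) (A w)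
                     \<le> 2 * exp (- (r\<^sup>2 * (card Y * p) / 4))"
      using prob_card_Pi_bernoulli_deviates[OF finite_vpairs _ p r, where C = "edge_pair w ` Y" and d = False]
      unfolding A_eq by simp
  qed simp
  also have "\<dots> \<le> 2 ^ n * (2 * exp (- (r\<^sup>2 * (card Y * p) / 4))) ^ k"
    by (intro mult_right_mono power_increasing) (auto simp: W_def card_Diff_subset_Int)
  finally show ?thesis
    unfolding A_def W_def deviant_vertices_def by simp
qed

subsection \<open>Bad pairs\<close>

definition bad_pairs :: "nat \<Rightarrow> real \<Rightarrow> real \<Rightarrow> (nat \<times> nat \<Rightarrow> bool) \<Rightarrow> nat set \<Rightarrow> (nat \<times> nat) set" where
  "bad_pairs n p \<rho> E X =
     {(v, w) \<in> vpairs n. v \<notin> X \<and> w \<notin> X \<and>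
        \<not> ((1 - \<rho>) * real (card X) * p\<^sup>2 \<le> real (common_nbrs E X v w) \<and>
             real (common_nbrs E X v w) \<le> (1 + \<rho>) * real (card X) * p\<^sup>2)}"

lemma bad_edges_eq: "bad_edges n p \<rho> E X = {c \<in> bad_pairs n p \<rho> E X. E c}"
  unfolding bad_edges_def bad_pairs_def by auto

lemma codegree_window:
  fixes r \<rho> a y z p :: real
  assumes r: "0 \<le> r" "3 * r \<le> \<rho>" "r \<le> 1" and p: "0 \<le> p" and a: "0 \<le> a"
    and y: "\<not> deviates r (a * p) y" and z: "\<not> deviates r (y * p) z"
  shows "(1 - \<rho>) * a * p\<^sup>2 \<le> z \<and> z \<le> (1 + \<rho>) * a * p\<^sup>2"
proof
  have ap: "0 \<le> a * p\<^sup>2" using a p by simp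
  have "0 \<le> r * r" and "r * r \<le> r"
    using r by (auto intro: mult_left_le_one_le)
  moreover have "(1 - r)\<^sup>2 = 1 - 2 * r + r * r" and "(1 + r)\<^sup>2 = 1 + 2 * r + r * r"
    by (simp_all add: power2_eq_square algebra_simps)
  ultimately have lower: "1 - \<rho> \<le> (1 - r)\<^sup>2" and upper: "(1 + r)\<^sup>2 \<le> 1 + \<rho>"
    using r by linarith+
  have "(1 - \<rho>) * (a * p\<^sup>2) \<le> (1 - r)\<^sup>2 * (a * p\<^sup>2)"
    using lower ap by (rule mult_right_mono)
  also have "\<dots> = (1 - r) * ((1 - r) * (a * p)) * p"
    by (simp add: power2_eq_square)
  also have "\<dots> \<le> (1 - r) * y * p"
    using y r p unfolding deviates_def by (intro mult_right_mono mult_left_mono) auto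
  also have "\<dots> \<le> z"
    using z unfolding deviates_def by (simp add: mult.assoc)
  finally show "(1 - \<rho>) * a * p\<^sup>2 \<le> z" by (simp add: mult.assoc)
  have "z \<le> (1 + r) * y * p"
    using z unfolding deviates_def by (simp add: mult.assoc)
  also have "\<dots> \<le> (1 + r) * ((1 + r) * (a * p)) * p"
    using y r p unfolding deviates_def by (intro mult_right_mono mult_left_mono) auto
  also have "\<dots> = (1 + r)\<^sup>2 * (a * p\<^sup>2)"
    by (simp add: power2_eq_square)
  also have "\<dots> \<le> (1 + \<rho>) * (a * p\<^sup>2)"
    using upper ap by (rule mult_right_mono)
  finally show "z \<le> (1 + \<rho>) * a * p\<^sup>2" by (simp add: mult.assoc)
qed

lemma bad_pairs_subset_deviant:
  fixes p r \<rho> :: real and n :: nat and E :: "nat \<times> nat \<Rightarrow> bool"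
  assumes r: "0 \<le> r" "3 * r \<le> \<rho>" "r \<le> 1" and p: "0 \<le> p"
  defines "D \<equiv> deviant_vertices n p r E"
  shows "bad_pairs n p \<rho> E X \<subseteq> (D X \<times> {..<n}) \<union> (SIGMA v:{..<n} - X - D X. D {x\<in>X. adj E v x})"
proof
  fix c assume c: "c \<in> bad_pairs n p \<rho> E X"
  obtain v w where vw: "c = (v, w)" by (cases c)
  have v: "v < n" "v \<notin> X" and w: "w < n" "w \<notin> X"
    and bad: "\<not> ((1 - \<rho>) * card X * p\<^sup>2 \<le> common_nbrs E X v w \<and>
                  common_nbrs E X v w \<le> (1 + \<rho>) * card X * p\<^sup>2)"
    using c unfolding vw bad_pairs_def vpairs_def by auto
  have "w \<in> D {x\<in>X. adj E v x}" if "v \<notin> D X"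
  proof (rule ccontr)
    assume "w \<notin> D {x\<in>X. adj E v x}"
    moreover have "common_nbrs E X v w = card {y\<in>{x\<in>X. adj E v x}. adj E w y}"
      unfolding common_nbrs_def by (rule arg_cong[where f = card]) auto
    ultimately show False
      using that v w bad codegree_window[OF r p, of "card X" "card {x\<in>X. adj E v x}"]
      unfolding D_def deviant_vertices_def by auto
  qed
  then show "c \<in> (D X \<times> {..<n}) \<union> (SIGMA v:{..<n} - X - D X. D {x\<in>X. adj E v x})"
    using v w vw by auto
qed

lemma card_bad_pairs_le:
  fixes p r \<rho> b :: real
  assumes r: "0 \<le> r" "3 * r \<le> \<rho>" "r \<le> 1" and p: "0 \<le> p"
    and few_X: "card (deviant_vertices n p r E X) \<le> b"
    and few_nbhd: "\<And>v. v \<in> {..<n} - X - deviant_vertices n p r E X \<Longrightarrow>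
                     card (deviant_vertices n p r E {x\<in>X. adj E v x}) \<le> b"
  shows "card (bad_pairs n p \<rho> E X) \<le> 2 * real n * b"
proof -
  let ?D = "deviant_vertices n p r E"
  let ?V = "{..<n} - X - ?D X"
  let ?W = "\<lambda>v. ?D {x\<in>X. adj E v x}"
  have "card (bad_pairs n p \<rho> E X) \<le> card (?D X \<times> {..<n}) + card (Sigma ?V ?W)"
    using bad_pairs_subset_deviant[OF r p]
    by (intro order_trans[OF card_mono card_Un_le]) (auto simp: deviant_vertices_def)
  also have "\<dots> = card (?D X) * n + (\<Sum>v\<in>?V. card (?W v))"
    by (simp add: card_cartesian_product card_SigmaI deviant_vertices_def)
  finally have "real (card (bad_pairs n p \<rho> E X)) \<le> real (card (?D X) * n + (\<Sum>v\<in>?V. card (?W v)))"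
    by (simp only: of_nat_le_iff)
  also have "\<dots> = card (?D X) * real n + (\<Sum>v\<in>?V. real (card (?W v)))"
    by simp
  also have "\<dots> \<le> b * n + (\<Sum>v\<in>?V. b)"
    using few_X few_nbhd by (intro add_mono mult_right_mono sum_mono) auto
  also have "\<dots> \<le> b * n + n * b"
  proof -
    have "card ?V \<le> n" by (rule order_trans[OF card_mono[of "{..<n}"]]) auto
    moreover have "0 \<le> b" using few_X of_nat_0_le_iff order_trans by blast
    ultimately have "card ?V * b \<le> n * b" by (intro mult_right_mono) auto
    then show ?thesis by (simp add: mult.commute)
  qed
  finally show ?thesis by (simp add: algebra_simps)
qed

lemma good_property_if_few_deviants:
  fixes p r \<rho> \<epsilon> D b :: real
  assumes p: "0 < p" "p \<le> 1" and r: "0 \<le> r" "3 * r \<le> \<rho>" "r \<le> 1" and D: "0 \<le> D"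
    and few: "\<And>Y. Y \<subseteq> {..<n} \<Longrightarrow> (1 - r) * D \<le> card Y * p \<Longrightarrow> card (deviant_vertices n p r E Y) \<le> b"
    and edges: "\<And>X. X \<subseteq> {..<n} \<Longrightarrow> card (bad_pairs n p \<rho> E X) \<le> 2 * real n * b \<Longrightarrow>
                  card (bad_edges n p \<rho> E X) \<le> \<epsilon> * (real n)\<^sup>2 * p"
  shows "good_property n p \<epsilon> \<rho> D E"
  unfolding good_property_def
proof (intro allI impI)
  fix X assume X: "X \<subseteq> {..<n}" and large: "D / p\<^sup>2 \<le> card X"
  have "D \<le> card X * p * p"
    using large p by (simp add: field_simps power2_eq_square)
  also have "\<dots> \<le> card X * p"
    using p by (simp add: mult_left_le)
  moreover have "(1 - r) * D \<le> D"
    using r D by (simp add: algebra_simps)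
  ultimately have few_X: "card (deviant_vertices n p r E X) \<le> b"
    by (intro few[OF X]) simp
  have "card (deviant_vertices n p r E {x\<in>X. adj E v x}) \<le> b"
    if v: "v \<in> {..<n} - X - deviant_vertices n p r E X" for v
  proof (rule few)
    show "{x\<in>X. adj E v x} \<subseteq> {..<n}" using X by auto
    have "(1 - r) * D \<le> (1 - r) * (card X * p * p)"
      using \<open>D \<le> card X * p * p\<close> r by (intro mult_left_mono) auto
    also have "\<dots> \<le> card {x\<in>X. adj E v x} * p"
      using v p unfolding deviant_vertices_def deviates_def
      by (auto simp: mult.assoc intro!: mult_right_mono[where c = p, simplified mult.assoc])
    finally show "(1 - r) * D \<le> card {x\<in>X. adj E v x} * p" .
  qed
  then have "card (bad_pairs n p \<rho> E X) \<le> 2 * real n * b"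
    using p r few_X by (intro card_bad_pairs_le) auto
  then show "card (bad_edges n p \<rho> E X) \<le> \<epsilon> * (real n)\<^sup>2 * p"
    by (rule edges[OF X])
qed

lemma depends_on_bad_pairs:
  "depends_on {c. fst c \<in> X \<or> snd c \<in> X} {E. bad_pairs n p \<rho> E X = B}"
  unfolding depends_on_def
proof (intro allI impI)
  fix E E' :: "nat \<times> nat \<Rightarrow> bool" assume agree: "\<forall>c\<in>{c. fst c \<in> X \<or> snd c \<in> X}. E c = E' c"
  have "adj E u x = adj E' u x" if "x \<in> X" for u x
    using agree that unfolding adj_iff_edge_pair edge_pair_def by (auto simp: min_def max_def)
  then have "common_nbrs E X v w = common_nbrs E' X v w" for v w
    unfolding common_nbrs_def by (intro arg_cong[where f = card] Collect_cong) auto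
  then show "E \<in> {E. bad_pairs n p \<rho> E X = B} \<longleftrightarrow> E' \<in> {E. bad_pairs n p \<rho> E X = B}"
    unfolding bad_pairs_def by simp
qed

text \<open>Whether a pair is bad is decided by the edges meeting \<open>X\<close>, whether it is an edge by the
  disjoint set of edges missing \<open>X\<close>; so given the bad pairs, their number of edges is binomial.\<close>

lemma prob_many_bad_edges_few_bad_pairs:
  fixes p m a :: real
  assumes p: "0 \<le> p" "p \<le> 1"
  shows "measure_pmf.prob (gnp n p)
           {E. a \<le> card (bad_edges n p \<rho> E X) \<and> card (bad_pairs n p \<rho> E X) \<le> m}
         \<le> exp (m * p * (exp 1 - 1) - a)"
proof -
  let ?M = "gnp n p"
  define outside where "outside = {c::nat \<times> nat. fst c \<notin> X \<and> snd c \<notin> X}"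
  define candidates where "candidates = {B. B \<subseteq> vpairs n \<inter> outside \<and> card B \<le> m}"
  define is_bad where "is_bad = (\<lambda>B. {E. bad_pairs n p \<rho> E X = B})"
  define many_edges where "many_edges = (\<lambda>B. {E :: nat \<times> nat \<Rightarrow> bool. a \<le> card {c\<in>B. E c}})"
  have "finite candidates"
    unfolding candidates_def by (rule finite_subset[of _ "Pow (vpairs n)"]) (auto simp: finite_vpairs)
  have "{E. a \<le> card (bad_edges n p \<rho> E X) \<and> card (bad_pairs n p \<rho> E X) \<le> m}
        \<subseteq> (\<Union>B\<in>candidates. is_bad B \<inter> many_edges B)"
  proof
    fix E assume E: "E \<in> {E. a \<le> card (bad_edges n p \<rho> E X) \<and> card (bad_pairs n p \<rho> E X) \<le> m}"
    have "bad_pairs n p \<rho> E X \<in> candidates"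
      using E unfolding candidates_def outside_def bad_pairs_def by auto
    moreover have "E \<in> is_bad (bad_pairs n p \<rho> E X) \<inter> many_edges (bad_pairs n p \<rho> E X)"
      using E unfolding is_bad_def many_edges_def bad_edges_eq by simp
    ultimately show "E \<in> (\<Union>B\<in>candidates. is_bad B \<inter> many_edges B)" by blast
  qed
  then have "measure_pmf.prob ?M {E. a \<le> card (bad_edges n p \<rho> E X) \<and> card (bad_pairs n p \<rho> E X) \<le> m}
      \<le> (\<Sum>B\<in>candidates. measure_pmf.prob ?M (is_bad B \<inter> many_edges B))"
    using \<open>finite candidates\<close>
    by (intro order_trans[OF measure_pmf.finite_measure_mono measure_pmf.finite_measure_subadditive_finite]) auto
  also have "\<dots> \<le> (\<Sum>B\<in>candidates. measure_pmf.prob ?M (is_bad B) * exp (m * p * (exp 1 - 1) - a))"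
  proof (rule sum_mono)
    fix B assume B: "B \<in> candidates"
    have "depends_on outside (many_edges B)"
      using B unfolding many_edges_def candidates_def by (intro depends_on_card_Collect) auto
    then have "measure_pmf.prob ?M (is_bad B \<inter> many_edges B) = measure_pmf.prob ?M (is_bad B) * measure_pmf.prob ?M (many_edges B)"
      unfolding gnp_def is_bad_def
      by (intro prob_Pi_pmf_Int_independent[OF finite_vpairs _ depends_on_bad_pairs]) (auto simp: outside_def)
    also have "measure_pmf.prob ?M (many_edges B) \<le> exp (card B * p * (exp 1 - 1) - a)"
      using B prob_card_Pi_bernoulli_exponential_tail[OF finite_vpairs _ p, where C = B and t = 1 and b = a]
      unfolding gnp_def many_edges_def candidates_def by auto
    also have "\<dots> \<le> exp (m * p * (exp 1 - 1) - a)"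
      using B p unfolding candidates_def by (auto intro!: mult_right_mono)
    finally show "measure_pmf.prob ?M (is_bad B \<inter> many_edges B) \<le> measure_pmf.prob ?M (is_bad B) * exp (m * p * (exp 1 - 1) - a)"
      by (simp add: mult_left_mono)
  qed
  also have "\<dots> = measure_pmf.prob ?M (\<Union>B\<in>candidates. is_bad B) * exp (m * p * (exp 1 - 1) - a)"
  proof -
    have "disjoint_family_on is_bad candidates"
      unfolding disjoint_family_on_def is_bad_def by auto
    then show ?thesis
      using \<open>finite candidates\<close> by (simp add: measure_pmf.finite_measure_finite_Union sum_distrib_right)
  qed
  also have "\<dots> \<le> exp (m * p * (exp 1 - 1) - a)"
    by (simp add: mult_left_le_one_le)
  finally show ?thesis .
qed

lemma prob_UN_le_card_mult:
  fixes b :: real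
  assumes "finite F" and "\<And>i. i \<in> F \<Longrightarrow> measure_pmf.prob M (A i) \<le> b"
  shows "measure_pmf.prob M (\<Union>i\<in>F. A i) \<le> card F * b"
proof -
  have "measure_pmf.prob M (\<Union>i\<in>F. A i) \<le> (\<Sum>i\<in>F. measure_pmf.prob M (A i))"
    using assms(1) by (intro measure_pmf.finite_measure_subadditive_finite) auto
  also have "\<dots> \<le> (\<Sum>i\<in>F. b)"
    using assms(2) by (rule sum_mono)
  finally show ?thesis by simp
qed

lemma two_power_mult_power_le:
  fixes q :: real
  assumes "0 \<le> q" "q \<le> (1/8) ^ N" "n \<le> N * k"
  shows "2 ^ n * q ^ k \<le> (1/4) ^ n"
proof -
  have "q ^ k \<le> ((1/8) ^ N) ^ k"
    using assms by (intro power_mono) auto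
  also have "\<dots> \<le> (1/8) ^ n"
    using assms(3) by (auto simp: power_mult[symmetric] intro: power_decreasing)
  finally have "2 ^ n * q ^ k \<le> 2 ^ n * (1/8::real) ^ n"
    by (intro mult_left_mono) auto
  also have "\<dots> = (1/4) ^ n"
    by (simp add: power_mult_distrib[symmetric])
  finally show ?thesis .
qed

lemma prob_some_large_set_many_deviants:
  fixes p r m :: real
  assumes p: "0 \<le> p" "p \<le> 1" and r: "0 \<le> r" "r \<le> 2"
    and tail: "2 * exp (- (r\<^sup>2 * m / 4)) \<le> (1/8) ^ N" and k: "n \<le> N * k"
  shows "measure_pmf.prob (gnp n p)
           {E. \<exists>Y\<subseteq>{..<n}. m \<le> card Y * p \<and> k \<le> card (deviant_vertices n p r E Y)}
         \<le> (1/2) ^ n"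
proof -
  define large where "large = {Y. Y \<subseteq> {..<n} \<and> m \<le> card Y * p}"
  have "card large \<le> card (Pow {..<n})"
    unfolding large_def by (intro card_mono) auto
  then have card_large: "real (card large) \<le> 2 ^ n"
    by (simp add: card_Pow flip: of_nat_le_iff)
  have "{E. \<exists>Y\<subseteq>{..<n}. m \<le> card Y * p \<and> k \<le> card (deviant_vertices n p r E Y)}
        = (\<Union>Y\<in>large. {E. k \<le> card (deviant_vertices n p r E Y)})"
    unfolding large_def by blast
  also have "measure_pmf.prob (gnp n p) \<dots> \<le> card large * (1/4) ^ n"
  proof (rule prob_UN_le_card_mult)
    show "finite large"
      unfolding large_def by (rule finite_subset[of _ "Pow {..<n}"]) auto
  next
    fix Y assume Y: "Y \<in> large"
    have "2 * exp (- (r\<^sup>2 * (card Y * p) / 4)) \<le> 2 * exp (- (r\<^sup>2 * m / 4))"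
      using Y unfolding large_def by (auto intro!: mult_left_mono divide_right_mono)
    also note tail
    finally have "2 ^ n * (2 * exp (- (r\<^sup>2 * (card Y * p) / 4))) ^ k \<le> (1/4) ^ n"
      by (intro two_power_mult_power_le[OF _ _ k]) auto
    then show "measure_pmf.prob (gnp n p) {E. k \<le> card (deviant_vertices n p r E Y)} \<le> (1/4) ^ n"
      using Y unfolding large_def by (auto intro: order_trans[OF prob_card_deviant_vertices_ge[OF p r]])
  qed
  also have "\<dots> \<le> 2 ^ n * (1/4) ^ n"
    using card_large by (intro mult_right_mono) auto
  also have "\<dots> = (1/2) ^ n"
    by (simp add: power_mult_distrib[symmetric])
  finally show ?thesis .
qed

lemma prob_some_set_many_bad_edges_few_bad_pairs:
  fixes p \<epsilon> :: real and N :: nat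
  assumes p: "0 \<le> p" "p \<le> 1" and N: "N > 0" "8 \<le> \<epsilon> * N"
  shows "measure_pmf.prob (gnp n p)
           {E. \<exists>X\<subseteq>{..<n}. \<epsilon> * (real n)\<^sup>2 * p \<le> card (bad_edges n p \<rho> E X) \<and>
                             card (bad_pairs n p \<rho> E X) \<le> 2 * real n * (n / N)}
         \<le> 2 ^ n * exp (- (\<epsilon> * (real n)\<^sup>2 * p / 2))"
proof -
  have "2 * real n * (n / N) * p * (exp 1 - 1) \<le> (\<epsilon> / 2) * ((real n)\<^sup>2 * p)"
  proof -
    have "exp 1 - 1 \<le> (2::real)" using exp_le by simp
    then have "2 * (exp 1 - 1) / N \<le> 4 / N"
      by (intro divide_right_mono) auto
    also have "\<dots> \<le> \<epsilon> / 2"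
      using N by (simp add: field_simps)
    finally have "2 * (exp 1 - 1) / N * ((real n)\<^sup>2 * p) \<le> (\<epsilon> / 2) * ((real n)\<^sup>2 * p)"
      using p by (intro mult_right_mono) auto
    then show ?thesis
      by (simp add: field_simps power2_eq_square)
  qed
  then have each: "measure_pmf.prob (gnp n p) {E. \<epsilon> * (real n)\<^sup>2 * p \<le> card (bad_edges n p \<rho> E X) \<and>
                 card (bad_pairs n p \<rho> E X) \<le> 2 * real n * (n / N)} \<le> exp (- (\<epsilon> * (real n)\<^sup>2 * p / 2))" for X
    by (intro order_trans[OF prob_many_bad_edges_few_bad_pairs[OF p]]) simp
  have "{E. \<exists>X\<subseteq>{..<n}. \<epsilon> * (real n)\<^sup>2 * p \<le> card (bad_edges n p \<rho> E X) \<and>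
                        card (bad_pairs n p \<rho> E X) \<le> 2 * real n * (n / N)}
        = (\<Union>X\<in>Pow {..<n}. {E. \<epsilon> * (real n)\<^sup>2 * p \<le> card (bad_edges n p \<rho> E X) \<and>
                                 card (bad_pairs n p \<rho> E X) \<le> 2 * real n * (n / N)})"
    by blast
  also have "measure_pmf.prob (gnp n p) \<dots> \<le> card (Pow {..<n}) * exp (- (\<epsilon> * (real n)\<^sup>2 * p / 2))"
    using each by (intro prob_UN_le_card_mult) auto
  finally show ?thesis
    by (simp add: card_Pow)
qed

lemma prob_good_property_ge:
  fixes p \<epsilon> \<rho> r D :: real and N :: nat
  assumes p: "0 < p" "p \<le> 1" and r: "0 \<le> r" "3 * r \<le> \<rho>" "r \<le> 1"
    and N: "N > 0" "8 \<le> \<epsilon> * N" and D: "0 \<le> D"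
    and tail: "2 * exp (- (r\<^sup>2 * ((1 - r) * D) / 4)) \<le> (1/8) ^ N"
  shows "1 - ((1/2) ^ n + 2 ^ n * exp (- (\<epsilon> * (real n)\<^sup>2 * p / 2)))
         \<le> measure_pmf.prob (gnp n p) {E. good_property n p \<epsilon> \<rho> D E}"
proof -
  let ?M = "gnp n p"
  define k where "k = nat \<lceil>real n / N\<rceil>"
  define many_deviants where "many_deviants =
    {E. \<exists>Y\<subseteq>{..<n}. (1 - r) * D \<le> card Y * p \<and> k \<le> card (deviant_vertices n p r E Y)}"
  define many_bad_edges where "many_bad_edges =
    {E. \<exists>X\<subseteq>{..<n}. \<epsilon> * (real n)\<^sup>2 * p \<le> card (bad_edges n p \<rho> E X) \<and>
                      card (bad_pairs n p \<rho> E X) \<le> 2 * real n * (n / N)}"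
  have "real n / N \<le> real k"
    unfolding k_def by linarith
  then have "real n \<le> real (N * k)"
    using N by (simp add: field_simps)
  then have k: "n \<le> N * k"
    by (simp only: of_nat_le_iff)
  have below_k: "real c \<le> n / N" if "\<not> k \<le> c" for c
    using that unfolding k_def not_le zless_nat_eq_int_zless less_ceiling_iff by simp
  have "good_property n p \<epsilon> \<rho> D E" if E: "E \<notin> many_deviants \<union> many_bad_edges" for E
  proof (rule good_property_if_few_deviants[OF p r D, where b = "n / N"])
    show "card (deviant_vertices n p r E Y) \<le> real n / N"
      if "Y \<subseteq> {..<n}" "(1 - r) * D \<le> card Y * p" for Y
      using that E below_k unfolding many_deviants_def by blast
    show "card (bad_edges n p \<rho> E X) \<le> \<epsilon> * (real n)\<^sup>2 * p"
      if "X \<subseteq> {..<n}" "card (bad_pairs n p \<rho> E X) \<le> 2 * real n * (n / N)" for X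
    proof -
      have "\<not> \<epsilon> * (real n)\<^sup>2 * p \<le> card (bad_edges n p \<rho> E X)"
        using that E unfolding many_bad_edges_def by blast
      then show ?thesis by simp
    qed
  qed
  then have "- {E. good_property n p \<epsilon> \<rho> D E} \<subseteq> many_deviants \<union> many_bad_edges"
    by blast
  then have "measure_pmf.prob ?M (- {E. good_property n p \<epsilon> \<rho> D E})
             \<le> measure_pmf.prob ?M many_deviants + measure_pmf.prob ?M many_bad_edges"
    by (intro order_trans[OF measure_pmf.finite_measure_mono measure_subadditive]) auto
  also have "\<dots> \<le> (1/2) ^ n + 2 ^ n * exp (- (\<epsilon> * (real n)\<^sup>2 * p / 2))"
  proof (rule add_mono)
    show "measure_pmf.prob ?M many_deviants \<le> (1/2) ^ n"
      unfolding many_deviants_def using p r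
      by (intro prob_some_large_set_many_deviants[OF _ _ _ _ tail k]) auto
    show "measure_pmf.prob ?M many_bad_edges \<le> 2 ^ n * exp (- (\<epsilon> * (real n)\<^sup>2 * p / 2))"
      unfolding many_bad_edges_def using p
      by (intro prob_some_set_many_bad_edges_few_bad_pairs[OF _ _ N]) auto
  qed
  finally show ?thesis
    using measure_pmf.prob_compl[of "{E. good_property n p \<epsilon> \<rho> D E}" ?M]
    by (simp add: Compl_eq_Diff_UNIV)
qed

lemma eventually_pos_and_times_n_ge:
  fixes p :: "nat \<Rightarrow> real"
  assumes nonneg: "\<And>n. 0 \<le> p n" and lim: "filterlim (\<lambda>n. p n * sqrt (real n)) at_top sequentially"
  shows "eventually (\<lambda>n. 0 < p n \<and> C \<le> p n * real n) sequentially"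
  using lim[unfolded filterlim_at_top, rule_format, of "max C 1"]
proof eventually_elim
  case (elim n)
  have "real n \<le> real n ^ 2"
    by (cases n) (auto simp: power2_eq_square)
  then have "sqrt (real n) \<le> real n"
    using real_sqrt_le_mono[of "real n" "real n ^ 2"] by simp
  then have "p n * sqrt (real n) \<le> p n * real n"
    using nonneg by (rule mult_left_mono)
  moreover have "C \<le> p n * sqrt (real n)" and "1 \<le> p n * sqrt (real n)"
    using elim by auto
  ultimately have "C \<le> p n * real n" and "p n \<noteq> 0"
    by auto
  then show ?case
    using nonneg[of n] by auto
qed

lemma exists_exp_tail_le:
  fixes c b :: real
  assumes "0 < c" "0 < b"
  shows "\<exists>D>0. 2 * exp (- (c * D)) \<le> b"
proof (intro exI conjI)
  define D where "D = max 1 (ln (2 / b) / c)"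
  show "0 < D" by (simp add: D_def)
  have "c * (ln (2 / b) / c) \<le> c * D"
    using assms by (intro mult_left_mono) (auto simp: D_def)
  then have "ln (2 / b) \<le> c * D"
    using assms by simp
  then have "exp (- (c * D)) \<le> exp (- ln (2 / b))"
    by simp
  also have "\<dots> = b / 2"
    using assms by (simp add: exp_minus)
  finally show "2 * exp (- (c * D)) \<le> b" by simp
qed

lemma two_power_mult_exp_le:
  fixes \<epsilon> q :: real
  assumes "0 < \<epsilon>" and "4 * ln 2 / \<epsilon> \<le> q * real n"
  shows "2 ^ n * exp (- (\<epsilon> * (real n)\<^sup>2 * q / 2)) \<le> (1/2) ^ n"
proof -
  have "4 * ln 2 \<le> \<epsilon> * (q * real n)"
    using assms by (simp add: field_simps)
  then have "real n * (4 * ln 2) \<le> real n * (\<epsilon> * (q * real n))"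
    by (rule mult_left_mono) simp
  then have "real n * ln 2 - \<epsilon> * (real n)\<^sup>2 * q / 2 \<le> - (real n * ln 2)"
    by (simp add: power2_eq_square algebra_simps)
  then have "exp (real n * ln 2 + - (\<epsilon> * (real n)\<^sup>2 * q / 2)) \<le> exp (- (real n * ln 2))"
    by simp
  moreover have "(2::real) ^ n = exp (real n * ln 2)"
    by (simp add: exp_of_nat_mult)
  moreover have "(1/2::real) ^ n = exp (- (real n * ln 2))"
    by (simp add: exp_minus exp_of_nat_mult power_one_over inverse_eq_divide)
  ultimately show ?thesis
    by (simp only: exp_add)
qed

lemma tendsto_prob_good_property:
  fixes p :: "nat \<Rightarrow> real" and \<epsilon> \<rho> r D :: real and N :: nat
  assumes p: "\<And>n. 0 \<le> p n \<and> p n \<le> 1" and lim: "filterlim (\<lambda>n. p n * sqrt (real n)) at_top sequentially"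
    and \<epsilon>: "0 < \<epsilon>" and r: "0 \<le> r" "3 * r \<le> \<rho>" "r \<le> 1"
    and N: "N > 0" "8 \<le> \<epsilon> * N" and D: "0 \<le> D"
    and tail: "2 * exp (- (r\<^sup>2 * ((1 - r) * D) / 4)) \<le> (1/8) ^ N"
  shows "(\<lambda>n. measure_pmf.prob (gnp n (p n)) {E. good_property n (p n) \<epsilon> \<rho> D E}) \<longlonglongrightarrow> 1"
proof -
  have "eventually (\<lambda>n. 0 < p n \<and> 4 * ln 2 / \<epsilon> \<le> p n * real n) sequentially"
    using p lim by (intro eventually_pos_and_times_n_ge) auto
  then have lower: "eventually (\<lambda>n. 1 - 2 * (1/2) ^ n \<le>
      measure_pmf.prob (gnp n (p n)) {E. good_property n (p n) \<epsilon> \<rho> D E}) sequentially"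
  proof eventually_elim
    case (elim n)
    then have "2 ^ n * exp (- (\<epsilon> * (real n)\<^sup>2 * p n / 2)) \<le> (1/2) ^ n"
      using \<epsilon> by (intro two_power_mult_exp_le) auto
    moreover have "1 - ((1/2) ^ n + 2 ^ n * exp (- (\<epsilon> * (real n)\<^sup>2 * p n / 2)))
         \<le> measure_pmf.prob (gnp n (p n)) {E. good_property n (p n) \<epsilon> \<rho> D E}"
      using elim p[of n] by (intro prob_good_property_ge[OF _ _ r N D tail]) auto
    ultimately show ?case by simp
  qed
  have "(\<lambda>n. 1 - 2 * (1/2::real) ^ n) \<longlonglongrightarrow> 1"
    by (auto intro!: tendsto_eq_intros LIMSEQ_power_zero)
  from tendsto_sandwich[OF lower _ this tendsto_const]
  show ?thesis by (simp add: measure_pmf.prob_le_1)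
qed

theorem proposition4p4:
  fixes p :: "nat \<Rightarrow> real"
  assumes "\<And>n. 0 \<le> p n \<and> p n \<le> 1"
    and "filterlim (\<lambda>n. p n * sqrt (real n)) at_top sequentially"
  shows "\<forall>\<epsilon>>0. \<forall>\<rho>>0. \<exists>D>0.
           (\<lambda>n. measure_pmf.prob (gnp n (p n)) {E. good_property n (p n) \<epsilon> \<rho> D E})
             \<longlonglongrightarrow> 1"
proof (intro allI impI)
  fix \<epsilon> \<rho> :: real assume \<epsilon>: "0 < \<epsilon>" and \<rho>: "0 < \<rho>"
  define r where "r = min \<rho> 1 / 3"
  have "0 < r" "r < 1" "3 * r \<le> \<rho>" using \<rho> by (auto simp: r_def)
  then have r: "0 \<le> r" "3 * r \<le> \<rho>" "r \<le> 1" and c: "0 < r\<^sup>2 * (1 - r) / 4" by auto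
  obtain N :: nat where "8 / \<epsilon> < N" using reals_Archimedean2 by blast
  then have N: "N > 0" "8 \<le> \<epsilon> * N"
    using \<epsilon> by (auto simp: field_simps intro: gr0I)
  obtain D where "D > 0" and "2 * exp (- (r\<^sup>2 * (1 - r) / 4 * D)) \<le> (1/8) ^ N"
    using exists_exp_tail_le[OF c, of "(1/8) ^ N"] by auto
  moreover from this have "2 * exp (- (r\<^sup>2 * ((1 - r) * D) / 4)) \<le> (1/8) ^ N"
    by (simp add: algebra_simps)
  ultimately show "\<exists>D>0. (\<lambda>n. measure_pmf.prob (gnp n (p n)) {E. good_property n (p n) \<epsilon> \<rho> D E}) \<longlonglongrightarrow> 1"
    using assms \<epsilon> r N by (intro exI[of _ D] conjI tendsto_prob_good_property) auto
qed

end
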